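(* Let $W\in L^\infty$ and $(X_t)_{t\in\mathbb{T}}\in\mathcal{A}(W)$. Then $(X_t)$ is Pareto optimal if and only if there exists $\lambda\in(0,\infty)^T$ such that $(X_t)$ solves Problem $\mathrm{P}_\lambda$.
   Context: Let $T\ge 1$ be an integer and $\mathbb{T}=\{1,\dots,T\}$. Let $(\Omega,\mathcal{F},(\mathcal{F}_t)_{t\in\{0,1,\dots,T\}},P)$ be a filtered probability space and $L^{\infty}=L^{\infty}(\Omega,\mathcal{F}_T,P)$. Let $(r_t)_{t\in\mathbb{T}}$ be a bounded, nonnegative, predictable process ($r_t$ is $\mathcal{F}_{t-1}$-measurable), $B_0=1$, $B_t=\prod_{k=1}^t(1+r_k)$, and for a process $(X_t)$ write $\tilde X_t=X_t/B_t$. For $W\in L^\infty$, $\mathcal{A}(W)$ is the set of $(\mathcal{F}_t)$-adapted processes $(Y_t)_{t\in\mathbb{T}}$ with $Y_t\in L^\infty$ for all $t$ and $\sum_{t\in\mathbb{T}}\tilde Y_t=W$ a.s. For each $t\in\mathbb{T}$, $u_t:\mathbb{R}\to\mathbb{R}$ is strictly concave, $C^1$, with $u_t'(x)>0$ for all $x$. For $\lambda\in\mathbb{R}_+^T\setminus\{0\}$, Problem $\mathrm{P}_\lambda$ is: maximize $\sum_{t\in\mathbb{T}}\lambda_tE[u_t(\tilde Y_t)]$ over $(Y_t)\in\mathcal{A}(W)$. An allocation $(X_t)\in\mathcal{A}(W)$ is Pareto optimal if there is no $(Y_t)\in\mathcal{A}(W)$ with $E[u_t(\tilde Y_t)]\ge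 E[u_t(\tilde X_t)]$ for all $t\in\mathbb{T}$ and $E[u_{t_0}(\tilde Y_{t_0})]>E[u_{t_0}(\tilde X_{t_0})]$ for at least one $t_0\in\mathbb{T}$. *)

theory Defs
  imports "HOL-Probability.Probability"
begin

definition finite_filtration :: "'a measure \<Rightarrow> (nat \<Rightarrow> 'a measure) \<Rightarrow> nat \<Rightarrow> bool" where
  "finite_filtration M F T \<longleftrightarrow>
     (\<forall>t\<le>T. subalgebra M (F t)) \<and> (\<forall>s t. s \<le> t \<longrightarrow> t \<le> T \<longrightarrow> sets (F s) \<subseteq> sets (F t))"

definition Linfty :: "'a measure \<Rightarrow> 'a measure \<Rightarrow> ('a \<Rightarrow> real) \<Rightarrow> bool" where
  "Linfty M G X \<longleftrightarrow> X \<in> borel_measurable G \<and> (\<exists>C. AE x in M. \<bar>X x\<bar> \<le> C)"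

definition rate_process :: "'a measure \<Rightarrow> (nat \<Rightarrow> 'a measure) \<Rightarrow> nat \<Rightarrow> (nat \<Rightarrow> 'a \<Rightarrow> real) \<Rightarrow> bool" where
  "rate_process M F T r \<longleftrightarrow>
     (\<forall>t\<in>{1..T}. r t \<in> borel_measurable (F (t - 1))) \<and>
     (\<exists>C. \<forall>t\<in>{1..T}. \<forall>x\<in>space M. 0 \<le> r t x \<and> r t x \<le> C)"

definition bank :: "(nat \<Rightarrow> 'a \<Rightarrow> real) \<Rightarrow> nat \<Rightarrow> 'a \<Rightarrow> real" where
  "bank r t x = (\<Prod>k\<in>{1..t}. 1 + r k x)"

definition disc :: "(nat \<Rightarrow> 'a \<Rightarrow> real) \<Rightarrow> (nat \<Rightarrow> 'a \<Rightarrow> real) \<Rightarrow> nat \<Rightarrow> 'a \<Rightarrow> real" where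
  "disc r Y t x = Y t x / bank r t x"

definition admissible ::
  "'a measure \<Rightarrow> (nat \<Rightarrow> 'a measure) \<Rightarrow> nat \<Rightarrow> (nat \<Rightarrow> 'a \<Rightarrow> real) \<Rightarrow> ('a \<Rightarrow> real)
    \<Rightarrow> (nat \<Rightarrow> 'a \<Rightarrow> real) \<Rightarrow> bool" where
  "admissible M F T r W Y \<longleftrightarrow>
     (\<forall>t\<in>{1..T}. Y t \<in> borel_measurable (F t) \<and> Linfty M (F T) (Y t)) \<and>
     (AE x in M. (\<Sum>t\<in>{1..T}. disc r Y t x) = W x)"

definition strictly_concave :: "(real \<Rightarrow> real) \<Rightarrow> bool" where
  "strictly_concave f \<longleftrightarrow>
     (\<forall>x y a. x \<noteq> y \<longrightarrow> 0 < a \<longrightarrow> a < 1 \<longrightarrow> a * f x + (1 - a) * f y < f (a * x + (1 - a) * y))"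

definition utility :: "(real \<Rightarrow> real) \<Rightarrow> bool" where
  "utility f \<longleftrightarrow> strictly_concave f \<and>
     (\<exists>f'. (\<forall>x. (f has_real_derivative f' x) (at x)) \<and> continuous_on UNIV f' \<and> (\<forall>x. 0 < f' x))"

definition exp_util :: "'a measure \<Rightarrow> (nat \<Rightarrow> 'a \<Rightarrow> real) \<Rightarrow> (nat \<Rightarrow> real \<Rightarrow> real)
    \<Rightarrow> (nat \<Rightarrow> 'a \<Rightarrow> real) \<Rightarrow> nat \<Rightarrow> real" where
  "exp_util M r u Y t = (\<integral>x. u t (disc r Y t x) \<partial>M)"

definition solves_P ::
  "'a measure \<Rightarrow> (nat \<Rightarrow> 'a measure) \<Rightarrow> nat \<Rightarrow> (nat \<Rightarrow> 'a \<Rightarrow> real) \<Rightarrow> (nat \<Rightarrow> real \<Rightarrow> real)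
    \<Rightarrow> ('a \<Rightarrow> real) \<Rightarrow> (nat \<Rightarrow> real) \<Rightarrow> (nat \<Rightarrow> 'a \<Rightarrow> real) \<Rightarrow> bool" where
  "solves_P M F T r u W lam X \<longleftrightarrow>
     admissible M F T r W X \<and>
     (\<forall>Y. admissible M F T r W Y \<longrightarrow>
        (\<Sum>t\<in>{1..T}. lam t * exp_util M r u Y t) \<le> (\<Sum>t\<in>{1..T}. lam t * exp_util M r u X t))"

definition pareto_optimal ::
  "'a measure \<Rightarrow> (nat \<Rightarrow> 'a measure) \<Rightarrow> nat \<Rightarrow> (nat \<Rightarrow> 'a \<Rightarrow> real) \<Rightarrow> (nat \<Rightarrow> real \<Rightarrow> real)
    \<Rightarrow> ('a \<Rightarrow> real) \<Rightarrow> (nat \<Rightarrow> 'a \<Rightarrow> real) \<Rightarrow> bool" where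
  "pareto_optimal M F T r u W X \<longleftrightarrow>
     admissible M F T r W X \<and>
     \<not> (\<exists>Y. admissible M F T r W Y \<and>
           (\<forall>t\<in>{1..T}. exp_util M r u X t \<le> exp_util M r u Y t) \<and>
           (\<exists>t0\<in>{1..T}. exp_util M r u X t0 < exp_util M r u Y t0))"

end

theory Submission
  imports Defs
begin

(*
  The direction "solves P_lam with lam > 0 ==> Pareto optimal" is immediate: a Pareto
  improvement would strictly increase the positively weighted sum of expected utilities.

  For the converse let X be Pareto optimal and write a_s = u_s'(X~_s) for the marginal
  utility of discounted consumption at date s.  Moving a bounded F_t-measurable discounted
  amount h from date t to the final date T is always admissible.  If E[a_t H] < 0 and
  E[a_T H] > 0, then transferring H/n for n large improves both dates (a first-order
  argument using dominated convergence), contradicting Pareto optimality.  Applying this to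
  the shifted directions H - c, a purely real-valued limiting argument shows that
  E[a_T H] = lam_t * E[a_t H] with lam_t = E[a_T] / E[a_t] > 0.  Finally, concavity gives
  lam_s (E u_s(Y~_s) - E u_s(X~_s)) <= E[a_T (Y~_s - X~_s)], and summing over s the right
  hand sides add up to E[a_T (W - W)] = 0, so X solves P_lam.
*)

section \<open>Utility functions\<close>

lemma utility_derivative:
  assumes "utility f"
  shows "(f has_real_derivative deriv f x) (at x)" "continuous_on UNIV (deriv f)" "0 < deriv f x"
proof -
  obtain f' where d: "\<And>x. (f has_real_derivative f' x) (at x)"
    and c: "continuous_on UNIV f'" and p: "\<And>x. 0 < f' x"
    using assms unfolding utility_def by blast
  have "deriv f = f'" using d by (auto intro: DERIV_imp_deriv)
  then show "(f has_real_derivative deriv f x) (at x)" "continuous_on UNIV (deriv f)" "0 < deriv f x"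
    using d c p by auto
qed

lemma utility_continuous: "utility f \<Longrightarrow> continuous_on UNIV f"
  using utility_derivative(1) by (metis DERIV_isCont continuous_at_imp_continuous_on)

lemma strictly_concave_imp_concave:
  assumes "strictly_concave f"
  shows "concave_on UNIV f"
  unfolding concave_on_iff
proof (intro conjI ballI allI impI)
  fix x y a b :: real
  assume ab: "0 \<le> a" "0 \<le> b" "a + b = 1"
  show "a * f x + b * f y \<le> f (a *\<^sub>R x + b *\<^sub>R y)"
  proof (cases "x = y \<or> a = 0 \<or> b = 0")
    case True
    then show ?thesis using ab by (auto simp flip: distrib_left distrib_right)
  next
    case False
    then have "a * f x + (1 - a) * f y < f (a * x + (1 - a) * y)"
      using assms ab unfolding strictly_concave_def by auto
    moreover have "b = 1 - a" using ab by simp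
    ultimately show ?thesis by simp
  qed
qed simp

lemma utility_below_tangent:
  assumes "utility f"
  shows "f y \<le> f x + deriv f x * (y - x)"
proof -
  have convex: "convex_on UNIV (\<lambda>x. - f x)"
    using strictly_concave_imp_concave assms unfolding utility_def concave_on_def by blast
  have "((\<lambda>x. - f x) has_field_derivative - deriv f x) (at x within UNIV)"
    using utility_derivative(1)[OF assms] by (auto intro: derivative_eq_intros)
  then have "- f y - - f x \<ge> - deriv f x * (y - x)"
    by (intro convex_on_imp_above_tangent[OF convex]) auto
  then show ?thesis by simp
qed

lemma continuous_bounded_on_interval:
  fixes g :: "real \<Rightarrow> real"
  assumes "continuous_on UNIV g"
  obtains B where "\<And>z. \<bar>z\<bar> \<le> K \<Longrightarrow> \<bar>g z\<bar> \<le> B"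
proof -
  have "compact (g ` {-K..K})"
    using assms by (intro compact_continuous_image) (auto intro: continuous_on_subset)
  then obtain B where "\<forall>y\<in>g ` {-K..K}. norm y \<le> B"
    using compact_imp_bounded bounded_iff by metis
  then have "\<And>z. \<bar>z\<bar> \<le> K \<Longrightarrow> \<bar>g z\<bar> \<le> B" by (auto simp: abs_le_iff)
  then show ?thesis by (rule that)
qed

section \<open>Essentially bounded random variables\<close>

lemma Linfty_const: "Linfty M G (\<lambda>x. c)"
  unfolding Linfty_def by auto

lemma Linfty_add:
  assumes "Linfty M G X" "Linfty M G Y"
  shows "Linfty M G (\<lambda>x. X x + Y x)"
proof -
  obtain C D where "AE x in M. \<bar>X x\<bar> \<le> C" "AE x in M. \<bar>Y x\<bar> \<le> D"
    using assms unfolding Linfty_def by blast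
  then have "AE x in M. \<bar>X x + Y x\<bar> \<le> C + D" by eventually_elim linarith
  then show ?thesis using assms unfolding Linfty_def by auto
qed

lemma Linfty_mult:
  assumes "Linfty M G X" "Linfty M G Y"
  shows "Linfty M G (\<lambda>x. X x * Y x)"
proof -
  obtain C D where "AE x in M. \<bar>X x\<bar> \<le> C" "AE x in M. \<bar>Y x\<bar> \<le> D"
    using assms unfolding Linfty_def by blast
  then have "AE x in M. \<bar>X x * Y x\<bar> \<le> C * D"
    by eventually_elim (simp add: abs_mult mult_mono')
  then show ?thesis using assms unfolding Linfty_def by auto
qed

lemma Linfty_diff: "Linfty M G X \<Longrightarrow> Linfty M G Y \<Longrightarrow> Linfty M G (\<lambda>x. X x - Y x)"
  using Linfty_add[of M G X "\<lambda>x. - 1 * Y x"] Linfty_mult[OF Linfty_const, of M G Y "- 1"] by simp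

lemma Linfty_uminus: "Linfty M G X \<Longrightarrow> Linfty M G (\<lambda>x. - X x)"
  using Linfty_diff[OF Linfty_const, of M G X 0] by simp

lemma Linfty_divide_const: "Linfty M G X \<Longrightarrow> Linfty M G (\<lambda>x. X x / c)"
  using Linfty_mult[OF _ Linfty_const, of M G X "inverse c"] by (simp add: divide_inverse)

lemma Linfty_continuous_comp:
  assumes g: "continuous_on UNIV g" and Z: "Linfty M G Z"
  shows "Linfty M G (\<lambda>x. g (Z x))"
proof -
  obtain K where K: "AE x in M. \<bar>Z x\<bar> \<le> K" using Z unfolding Linfty_def by blast
  obtain B where B: "\<And>z. \<bar>z\<bar> \<le> K \<Longrightarrow> \<bar>g z\<bar> \<le> B"
    using continuous_bounded_on_interval[OF g] by blast
  have "AE x in M. \<bar>g (Z x)\<bar> \<le> B" using K by eventually_elim (rule B)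
  moreover have "(\<lambda>x. g (Z x)) \<in> borel_measurable G"
    using Z measurable_compose borel_measurable_continuous_onI[OF g] unfolding Linfty_def by blast
  ultimately show ?thesis unfolding Linfty_def by blast
qed

lemma Linfty_subalgebra: "subalgebra N G \<Longrightarrow> Linfty M G X \<Longrightarrow> Linfty M N X"
  unfolding Linfty_def using measurable_from_subalg by blast

lemma (in prob_space) Linfty_integrable: "Linfty M M X \<Longrightarrow> integrable M X"
  unfolding Linfty_def using integrable_const_bound[of X] by auto

lemma (in prob_space) Linfty_pos_expectation:
  assumes "Linfty M M X" "\<And>x. x \<in> space M \<Longrightarrow> 0 < X x"
  shows "0 < (\<integral>x. X x \<partial>M)"
  using assms by (intro expectation_greater Linfty_integrable AE_I2)

lemma (in prob_space) integral_mult_shift: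
  assumes A: "Linfty M M A" and G: "Linfty M M G"
  shows "(\<integral>x. A x * (G x - c) \<partial>M) = (\<integral>x. A x * G x \<partial>M) - c * (\<integral>x. A x \<partial>M)"
proof -
  have "integrable M A" "integrable M (\<lambda>x. A x * G x)"
    using A Linfty_mult[OF A G] by (auto intro: Linfty_integrable)
  moreover have "(\<integral>x. A x * (G x - c) \<partial>M) = (\<integral>x. A x * G x - c * A x \<partial>M)"
    by (simp add: algebra_simps)
  ultimately show ?thesis by simp
qed

section \<open>First-order expansion of expected utility\<close>

lemma (in prob_space) expected_utility_below_tangent:
  assumes f: "utility f" and Z: "Linfty M M Z" and Z': "Linfty M M Z'"
  shows "(\<integral>x. f (Z' x) \<partial>M) \<le> (\<integral>x. f (Z x) \<partial>M) + (\<integral>x. deriv f (Z x) * (Z' x - Z x) \<partial>M)"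
proof -
  have iZ: "integrable M (\<lambda>x. f (Z x))"
    using Linfty_continuous_comp[OF utility_continuous[OF f] Z] by (rule Linfty_integrable)
  have iZ': "integrable M (\<lambda>x. f (Z' x))"
    using Linfty_continuous_comp[OF utility_continuous[OF f] Z'] by (rule Linfty_integrable)
  have iD: "integrable M (\<lambda>x. deriv f (Z x) * (Z' x - Z x))"
    using Linfty_mult[OF Linfty_continuous_comp[OF utility_derivative(2)[OF f] Z] Linfty_diff[OF Z' Z]]
    by (rule Linfty_integrable)
  have "(\<integral>x. f (Z' x) \<partial>M) \<le> (\<integral>x. f (Z x) + deriv f (Z x) * (Z' x - Z x) \<partial>M)"
    using iZ iZ' iD utility_below_tangent[OF f] by (intro integral_mono) auto
  also have "\<dots> = (\<integral>x. f (Z x) \<partial>M) + (\<integral>x. deriv f (Z x) * (Z' x - Z x) \<partial>M)"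
    using iZ iD by simp
  finally show ?thesis .
qed

lemma (in prob_space) perturbed_integral_tendsto:
  fixes g :: "real \<Rightarrow> real"
  assumes g: "continuous_on UNIV g" and Z: "Linfty M M Z" and H: "Linfty M M H"
  shows "(\<lambda>n. \<integral>x. g (Z x + H x / real (Suc n)) * H x \<partial>M) \<longlonglongrightarrow> (\<integral>x. g (Z x) * H x \<partial>M)"
proof -
  obtain K1 K2 where K1: "AE x in M. \<bar>Z x\<bar> \<le> K1" and K2: "AE x in M. \<bar>H x\<bar> \<le> K2"
    using Z H unfolding Linfty_def by blast
  obtain B where B: "\<And>z. \<bar>z\<bar> \<le> K1 + K2 \<Longrightarrow> \<bar>g z\<bar> \<le> B"
    using continuous_bounded_on_interval[OF g] by blast
  have shrink: "\<bar>h / real (Suc n)\<bar> \<le> \<bar>h\<bar>" for h :: real and n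
    by (simp add: abs_divide divide_le_eq mult_le_cancel_left1)
  show ?thesis
  proof (rule integral_dominated_convergence[where w = "\<lambda>_. B * K2"])
    show "AE x in M. norm (g (Z x + H x / real (Suc n)) * H x) \<le> B * K2" for n
      using K1 K2
    proof eventually_elim
      case (elim x)
      then have "\<bar>g (Z x + H x / real (Suc n))\<bar> \<le> B"
        using shrink[of "H x" n] by (intro B) linarith
      then show ?case using elim by (simp add: abs_mult mult_mono')
    qed
    show "AE x in M. (\<lambda>n. g (Z x + H x / real (Suc n)) * H x) \<longlonglongrightarrow> g (Z x) * H x"
    proof (rule AE_I2)
      fix x
      have "(\<lambda>n. Z x + H x * inverse (real (Suc n))) \<longlonglongrightarrow> Z x + H x * 0"
        by (intro tendsto_intros LIMSEQ_inverse_real_of_nat)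
      then have "(\<lambda>n. g (Z x + H x / real (Suc n))) \<longlonglongrightarrow> g (Z x)"
        using continuous_on_tendsto_compose[OF g] by (force simp: divide_inverse)
      then show "(\<lambda>n. g (Z x + H x / real (Suc n)) * H x) \<longlonglongrightarrow> g (Z x) * H x"
        by (intro tendsto_mult tendsto_const)
    qed
    show "(\<lambda>x. g (Z x + H x / real (Suc n)) * H x) \<in> borel_measurable M" for n
      using Linfty_mult[OF Linfty_continuous_comp[OF g Linfty_add[OF Z Linfty_divide_const[OF H]]] H]
      unfolding Linfty_def by blast
    show "(\<lambda>x. g (Z x) * H x) \<in> borel_measurable M"
      using Linfty_mult[OF Linfty_continuous_comp[OF g Z] H] unfolding Linfty_def by blast
  qed simp
qed

lemma (in prob_space) improving_direction:
  assumes f: "utility f" and Z: "Linfty M M Z" and H: "Linfty M M H"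
    and pos: "0 < (\<integral>x. deriv f (Z x) * H x \<partial>M)"
  shows "\<forall>\<^sub>F n in sequentially. (\<integral>x. f (Z x) \<partial>M) < (\<integral>x. f (Z x + H x / real (Suc n)) \<partial>M)"
proof -
  have "\<forall>\<^sub>F n in sequentially. 0 < (\<integral>x. deriv f (Z x + H x / real (Suc n)) * H x \<partial>M)"
    using order_tendstoD(1)[OF perturbed_integral_tendsto[OF utility_derivative(2)[OF f] Z H] pos] .
  then show ?thesis
  proof eventually_elim
    case (elim n)
    define Zn where "Zn x = Z x + H x / real (Suc n)" for x
    have Zn: "Linfty M M Zn"
      unfolding Zn_def by (intro Linfty_add Z Linfty_divide_const H)
    have "(\<integral>x. f (Z x) \<partial>M) \<le> (\<integral>x. f (Zn x) \<partial>M) + (\<integral>x. deriv f (Zn x) * (Z x - Zn x) \<partial>M)"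
      by (rule expected_utility_below_tangent[OF f Zn Z])
    also have "(\<integral>x. deriv f (Zn x) * (Z x - Zn x) \<partial>M)
        = - (\<integral>x. deriv f (Zn x) * H x \<partial>M) / real (Suc n)"
      by (simp add: Zn_def)
    finally have le: "(\<integral>x. f (Z x) \<partial>M)
        \<le> (\<integral>x. f (Zn x) \<partial>M) + - (\<integral>x. deriv f (Zn x) * H x \<partial>M) / real (Suc n)" .
    have "0 < (\<integral>x. deriv f (Zn x) * H x \<partial>M) / real (Suc n)"
      using elim by (simp add: Zn_def)
    with le have "(\<integral>x. f (Z x) \<partial>M) < (\<integral>x. f (Zn x) \<partial>M)" by linarith
    then show ?case by (simp add: Zn_def)
  qed
qed

text \<open>The real-number core of the proportionality argument: if b \<le> c q whenever a < c p,
  then b \<le> (q / p) a.\<close>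
lemma le_ratio_if_shifts_bounded:
  fixes a b p q :: real
  assumes p: "0 < p" and q: "0 < q" and shift: "\<And>c. a < c * p \<Longrightarrow> b \<le> c * q"
  shows "b \<le> q / p * a"
proof (rule field_le_epsilon)
  fix e :: real assume e: "0 < e"
  have "a < (a / p + e / q) * p" using p q e by (simp add: field_simps)
  then have "b \<le> (a / p + e / q) * q" by (rule shift)
  also have "\<dots> = q / p * a + e" using q by (simp add: field_simps)
  finally show "b \<le> q / p * a + e" .
qed

section \<open>The market: discounting and transfers between dates\<close>

locale market = prob_space M for M :: "'a measure" +
  fixes F :: "nat \<Rightarrow> 'a measure" and T :: nat and r :: "nat \<Rightarrow> 'a \<Rightarrow> real"
  assumes filtration: "finite_filtration M F T" and rate: "rate_process M F T r"
begin

lemma subalgebra_F: "t \<le> T \<Longrightarrow> subalgebra M (F t)"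
  using filtration unfolding finite_filtration_def by auto

lemma Linfty_F_mono: "s \<le> t \<Longrightarrow> t \<le> T \<Longrightarrow> Linfty M (F s) X \<Longrightarrow> Linfty M (F t) X"
  using filtration subalgebra_F[of s] subalgebra_F[of t]
  by (intro Linfty_subalgebra[of "F t" "F s"]) (auto simp: finite_filtration_def subalgebra_def)

lemma Linfty_F_M: "t \<le> T \<Longrightarrow> Linfty M (F t) X \<Longrightarrow> Linfty M M X"
  using Linfty_subalgebra subalgebra_F by blast

lemma bank_ge_1: "x \<in> space M \<Longrightarrow> t \<le> T \<Longrightarrow> 1 \<le> bank r t x"
  unfolding bank_def using rate unfolding rate_process_def by (intro prod_ge_1) auto

lemma bank_Linfty: "t \<le> T \<Longrightarrow> Linfty M (F t) (bank r t)"
proof -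
  assume t: "t \<le> T"
  obtain C where C: "\<forall>k\<in>{1..T}. \<forall>x\<in>space M. 0 \<le> r k x \<and> r k x \<le> C"
    using rate unfolding rate_process_def by blast
  have "r k \<in> borel_measurable (F t)" if "k \<in> {1..t}" for k
    using rate that t Linfty_F_mono[of "k - 1" t "r k"] C
    unfolding rate_process_def Linfty_def by fastforce
  then have meas: "bank r t \<in> borel_measurable (F t)"
    unfolding bank_def[abs_def] by (intro borel_measurable_prod) auto
  have "\<bar>bank r t x\<bar> \<le> (1 + \<bar>C\<bar>) ^ T" if x: "x \<in> space M" for x
  proof -
    have "bank r t x \<le> (\<Prod>k\<in>{1..t}. 1 + \<bar>C\<bar>)"
      unfolding bank_def using C t x by (intro prod_mono) force
    also have "\<dots> \<le> (1 + \<bar>C\<bar>) ^ T" using t by (simp add: power_increasing)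
    finally show ?thesis using bank_ge_1[OF x t] by simp
  qed
  then show ?thesis unfolding Linfty_def using meas by (blast intro: AE_I2)
qed

lemma disc_Linfty:
  assumes adm: "admissible M F T r W Y" and t: "t \<in> {1..T}"
  shows "Linfty M (F t) (disc r Y t)"
proof -
  obtain C where C: "AE x in M. \<bar>Y t x\<bar> \<le> C"
    using adm t unfolding admissible_def Linfty_def by blast
  have "AE x in M. \<bar>disc r Y t x\<bar> \<le> C" using C AE_space
  proof eventually_elim
    case (elim x)
    have "1 \<le> bank r t x" using bank_ge_1 elim t by auto
    then have "\<bar>Y t x\<bar> / bank r t x \<le> \<bar>Y t x\<bar>"
      by (simp add: divide_le_eq mult_le_cancel_left1)
    then show ?case using elim \<open>1 \<le> bank r t x\<close> unfolding disc_def by (simp add: abs_divide)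
  qed
  moreover have "disc r Y t \<in> borel_measurable (F t)"
    using adm t bank_Linfty[of t] unfolding admissible_def Linfty_def disc_def[abs_def]
    by (intro borel_measurable_divide) auto
  ultimately show ?thesis unfolding Linfty_def by blast
qed

end

text \<open>Moving the discounted amount h from date t to date t': date t consumes B_t h less,
  date t' consumes B_t' h more.\<close>
definition transfer :: "(nat \<Rightarrow> 'a \<Rightarrow> real) \<Rightarrow> (nat \<Rightarrow> 'a \<Rightarrow> real) \<Rightarrow> nat \<Rightarrow> nat
    \<Rightarrow> ('a \<Rightarrow> real) \<Rightarrow> nat \<Rightarrow> 'a \<Rightarrow> real" where
  "transfer r X t t' h s x = X s x + (of_bool (s = t') - of_bool (s = t)) * (bank r s x * h x)"

context market
begin

lemma disc_transfer:
  assumes "x \<in> space M" "s \<le> T"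
  shows "disc r (transfer r X t t' h) s x = disc r X s x + (of_bool (s = t') - of_bool (s = t)) * h x"
  using bank_ge_1[OF assms] unfolding disc_def transfer_def by (simp add: field_simps)

text \<open>A transfer forward in time of a bounded F_t-measurable amount preserves admissibility:
  the budget constraint only involves the sum of discounted values.\<close>
lemma transfer_admissible:
  assumes adm: "admissible M F T r W X" and t: "t \<in> {1..T}" and t': "t' \<in> {1..T}"
    and tt': "t \<le> t'" and h: "Linfty M (F t) h"
  shows "admissible M F T r W (transfer r X t t' h)"
  unfolding admissible_def
proof (intro conjI ballI)
  fix s assume s: "s \<in> {1..T}"
  have X: "Linfty M (F s) (X s)"
    using adm s unfolding admissible_def Linfty_def by auto
  have Ys: "Linfty M (F s) (transfer r X t t' h s)"
  proof (cases "s = t \<or> s = t'")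
    case True
    then have "Linfty M (F s) h" using Linfty_F_mono[OF _ _ h] tt' s by auto
    then show ?thesis unfolding transfer_def
      using X bank_Linfty[of s] s by (intro Linfty_add Linfty_mult Linfty_const) auto
  next
    case False
    then show ?thesis using X unfolding transfer_def by simp
  qed
  then show "transfer r X t t' h s \<in> borel_measurable (F s)"
    unfolding Linfty_def by blast
  show "Linfty M (F T) (transfer r X t t' h s)"
    using Linfty_F_mono[OF _ _ Ys] s by auto
next
  have "AE x in M. (\<Sum>s\<in>{1..T}. disc r X s x) = W x" using adm unfolding admissible_def by blast
  then show "AE x in M. (\<Sum>s\<in>{1..T}. disc r (transfer r X t t' h) s x) = W x"
    using AE_space
  proof eventually_elim
    case (elim x)
    then have "(\<Sum>s\<in>{1..T}. disc r (transfer r X t t' h) s x)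
        = (\<Sum>s\<in>{1..T}. disc r X s x + (of_bool (s = t') - of_bool (s = t)) * h x)"
      by (intro sum.cong) (auto simp: disc_transfer)
    also have "\<dots> = (\<Sum>s\<in>{1..T}. disc r X s x)
        + (\<Sum>s\<in>{1..T}. of_bool (s = t')) * h x - (\<Sum>s\<in>{1..T}. of_bool (s = t)) * h x"
      by (simp add: sum.distrib sum_subtractf left_diff_distrib sum_distrib_right add_diff_eq)
    also have "\<dots> = W x" using elim t t' by simp
    finally show ?case .
  qed
qed

text \<open>Two admissible allocations for the same endowment have the same total discounted
  value, so any bounded valuation of the deviation sums to zero over the dates.\<close>
lemma admissible_deviation_orthogonal:
  assumes X: "admissible M F T r W X" and Y: "admissible M F T r W Y" and A: "Linfty M M A"
  shows "(\<Sum>s\<in>{1..T}. \<integral>x. A x * (disc r Y s x - disc r X s x) \<partial>M) = 0"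
proof -
  have "integrable M (\<lambda>x. A x * (disc r Y s x - disc r X s x))" if s: "s \<in> {1..T}" for s
    using s disc_Linfty[OF X s] disc_Linfty[OF Y s]
    by (intro Linfty_integrable Linfty_mult A Linfty_diff Linfty_F_M[of s]) auto
  then have "(\<Sum>s\<in>{1..T}. \<integral>x. A x * (disc r Y s x - disc r X s x) \<partial>M)
      = (\<integral>x. (\<Sum>s\<in>{1..T}. A x * (disc r Y s x - disc r X s x)) \<partial>M)"
    by (intro Bochner_Integration.integral_sum[symmetric]) auto
  also have "\<dots> = (\<integral>x. A x * ((\<Sum>s\<in>{1..T}. disc r Y s x) - (\<Sum>s\<in>{1..T}. disc r X s x)) \<partial>M)"
    by (simp add: sum_distrib_left[symmetric] sum_subtractf)
  also have "\<dots> = 0"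
  proof (rule integral_eq_zero_AE)
    have "AE x in M. (\<Sum>s\<in>{1..T}. disc r Y s x) = W x" "AE x in M. (\<Sum>s\<in>{1..T}. disc r X s x) = W x"
      using X Y unfolding admissible_def by auto
    then show "AE x in M. A x * ((\<Sum>s\<in>{1..T}. disc r Y s x) - (\<Sum>s\<in>{1..T}. disc r X s x)) = 0"
      by eventually_elim simp
  qed
  finally show ?thesis .
qed

end

section \<open>Pareto optima and marginal utilities\<close>

definition marginal :: "(nat \<Rightarrow> real \<Rightarrow> real) \<Rightarrow> (nat \<Rightarrow> 'a \<Rightarrow> real) \<Rightarrow> (nat \<Rightarrow> 'a \<Rightarrow> real)
    \<Rightarrow> nat \<Rightarrow> 'a \<Rightarrow> real" where
  "marginal u r X s x = deriv (u s) (disc r X s x)"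

locale economy = market +
  fixes u :: "nat \<Rightarrow> real \<Rightarrow> real"
  assumes horizon: "1 \<le> T" and utilities: "\<forall>t\<in>{1..T}. utility (u t)"
begin

lemma utility_at: "s \<in> {1..T} \<Longrightarrow> utility (u s)"
  using utilities by blast

lemma marginal_Linfty:
  assumes "admissible M F T r W X" "s \<in> {1..T}"
  shows "Linfty M (F s) (marginal u r X s)"
  unfolding marginal_def[abs_def]
  by (rule Linfty_continuous_comp[OF utility_derivative(2)[OF utility_at] disc_Linfty]) (use assms in auto)

lemma marginal_pos_expectation:
  assumes "admissible M F T r W X" "s \<in> {1..T}"
  shows "0 < (\<integral>x. marginal u r X s x \<partial>M)"
proof (rule Linfty_pos_expectation)
  show "Linfty M M (marginal u r X s)"
    using Linfty_F_M[OF _ marginal_Linfty[OF assms]] assms(2) by auto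
  show "0 < marginal u r X s x" for x
    unfolding marginal_def by (rule utility_derivative(3)[OF utility_at[OF assms(2)]])
qed

lemma exp_util_below_linearisation:
  assumes X: "admissible M F T r W X" and Y: "admissible M F T r W' Y" and s: "s \<in> {1..T}"
  shows "exp_util M r u Y s \<le>
         exp_util M r u X s + (\<integral>x. marginal u r X s x * (disc r Y s x - disc r X s x) \<partial>M)"
proof -
  have "Linfty M M (disc r X s)" "Linfty M M (disc r Y s)"
    using Linfty_F_M[OF _ disc_Linfty[OF X s]] Linfty_F_M[OF _ disc_Linfty[OF Y s]] s by auto
  then show ?thesis
    unfolding exp_util_def marginal_def by (rule expected_utility_below_tangent[OF utility_at[OF s]])
qed

text \<open>At a Pareto optimum, no bounded F_t-measurable direction H can have negative marginal
  value at date t and positive marginal value at date T: transferring H/(n+1) from t to T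
  would otherwise be a Pareto improvement.\<close>
lemma pareto_no_improving_transfer:
  assumes po: "pareto_optimal M F T r u W X" and t: "t \<in> {1..T}"
    and H: "Linfty M (F t) H" and neg: "(\<integral>x. marginal u r X t x * H x \<partial>M) < 0"
  shows "(\<integral>x. marginal u r X T x * H x \<partial>M) \<le> 0"
proof (rule ccontr)
  assume "\<not> ?thesis"
  then have posT: "0 < (\<integral>x. marginal u r X T x * H x \<partial>M)" by simp
  have adm: "admissible M F T r W X" using po unfolding pareto_optimal_def by blast
  have T: "T \<in> {1..T}" and tT: "t \<noteq> T" using horizon neg posT by auto
  have HM: "Linfty M M H" using Linfty_F_M[OF _ H] t by auto
  have Zt: "Linfty M M (disc r X t)" and ZT: "Linfty M M (disc r X T)"
    using Linfty_F_M[OF _ disc_Linfty[OF adm t]] Linfty_F_M[OF _ disc_Linfty[OF adm T]] t by auto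
  have "0 < (\<integral>x. deriv (u t) (disc r X t x) * - H x \<partial>M)"
    using neg by (simp add: marginal_def)
  from improving_direction[OF utility_at[OF t] Zt Linfty_uminus[OF HM] this]
  have "\<forall>\<^sub>F n in sequentially.
      (\<integral>x. u t (disc r X t x) \<partial>M) < (\<integral>x. u t (disc r X t x + - H x / real (Suc n)) \<partial>M)"
    by simp
  moreover have "\<forall>\<^sub>F n in sequentially.
      (\<integral>x. u T (disc r X T x) \<partial>M) < (\<integral>x. u T (disc r X T x + H x / real (Suc n)) \<partial>M)"
    using posT by (intro improving_direction[OF utility_at[OF T] ZT HM]) (simp add: marginal_def)
  ultimately obtain n where
    gain_t: "(\<integral>x. u t (disc r X t x) \<partial>M) < (\<integral>x. u t (disc r X t x + - H x / real (Suc n)) \<partial>M)" and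
    gain_T: "(\<integral>x. u T (disc r X T x) \<partial>M) < (\<integral>x. u T (disc r X T x + H x / real (Suc n)) \<partial>M)"
    using eventually_happens'[OF sequentially_bot] eventually_conj by blast
  define Y where "Y = transfer r X t T (\<lambda>x. H x / real (Suc n))"
  have admY: "admissible M F T r W Y"
    unfolding Y_def using t by (intro transfer_admissible[OF adm t T] Linfty_divide_const[OF H]) auto
  have EU_Y: "exp_util M r u Y s
      = (\<integral>x. u s (disc r X s x + (of_bool (s = T) - of_bool (s = t)) * (H x / real (Suc n))) \<partial>M)"
    if "s \<in> {1..T}" for s
    unfolding exp_util_def Y_def using that by (intro Bochner_Integration.integral_cong) (auto simp: disc_transfer)
  have better_T: "exp_util M r u X T < exp_util M r u Y T"
    using gain_T EU_Y[OF T] tT by (simp add: exp_util_def)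
  have "exp_util M r u X s \<le> exp_util M r u Y s" if s: "s \<in> {1..T}" for s
  proof -
    consider "s = t" | "s = T" | "s \<noteq> t" "s \<noteq> T" by blast
    then show ?thesis
    proof cases
      case 1
      then show ?thesis using gain_t EU_Y[OF t] tT by (simp add: exp_util_def)
    next
      case 2
      then show ?thesis using better_T by simp
    next
      case 3
      then show ?thesis using EU_Y[OF s] by (simp add: exp_util_def)
    qed
  qed
  then show False using po admY better_T T unfolding pareto_optimal_def by blast
qed

lemma pareto_marginal_proportional:
  assumes po: "pareto_optimal M F T r u W X" and t: "t \<in> {1..T}" and H: "Linfty M (F t) H"
  shows "(\<integral>x. marginal u r X T x * H x \<partial>M) =
         (\<integral>x. marginal u r X T x \<partial>M) / (\<integral>x. marginal u r X t x \<partial>M) * (\<integral>x. marginal u r X t x * H x \<partial>M)"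
proof -
  have adm: "admissible M F T r W X" using po unfolding pareto_optimal_def by blast
  have T: "T \<in> {1..T}" using horizon by auto
  have at: "Linfty M M (marginal u r X t)"
    using Linfty_F_M[OF _ marginal_Linfty[OF adm t]] t by auto
  have aT: "Linfty M M (marginal u r X T)"
    using Linfty_F_M[OF _ marginal_Linfty[OF adm T]] by auto
  have bound: "(\<integral>x. marginal u r X T x * G x \<partial>M)
      \<le> (\<integral>x. marginal u r X T x \<partial>M) / (\<integral>x. marginal u r X t x \<partial>M) * (\<integral>x. marginal u r X t x * G x \<partial>M)"
    if G: "Linfty M (F t) G" for G
  proof (rule le_ratio_if_shifts_bounded[OF marginal_pos_expectation[OF adm t] marginal_pos_expectation[OF adm T]])
    fix c assume c: "(\<integral>x. marginal u r X t x * G x \<partial>M) < c * (\<integral>x. marginal u r X t x \<partial>M)"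
    have GM: "Linfty M M G" using Linfty_F_M G t by auto
    have "(\<integral>x. marginal u r X t x * (G x - c) \<partial>M) < 0"
      using c integral_mult_shift[OF at GM] by simp
    then have "(\<integral>x. marginal u r X T x * (G x - c) \<partial>M) \<le> 0"
      by (intro pareto_no_improving_transfer[OF po t] Linfty_diff G Linfty_const)
    then show "(\<integral>x. marginal u r X T x * G x \<partial>M) \<le> c * (\<integral>x. marginal u r X T x \<partial>M)"
      using integral_mult_shift[OF aT GM] by simp
  qed
  from bound[OF H] bound[OF Linfty_uminus[OF H]] show ?thesis by simp
qed

text \<open>Main direction of the theorem: a Pareto optimum solves P_lam for the weights
  lam_s = E[a_T] / E[a_s], because lam_s times the gain at date s is bounded by the a_T-value
  of the deviation at date s, and these values sum to zero.\<close>
lemma pareto_imp_solves_P: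
  assumes po: "pareto_optimal M F T r u W X"
  shows "\<exists>lam. (\<forall>t\<in>{1..T}. 0 < lam t) \<and> solves_P M F T r u W lam X"
proof -
  have adm: "admissible M F T r W X" using po unfolding pareto_optimal_def by blast
  have T: "T \<in> {1..T}" using horizon by auto
  define lam where "lam s = (\<integral>x. marginal u r X T x \<partial>M) / (\<integral>x. marginal u r X s x \<partial>M)" for s
  have lam_pos: "\<forall>s\<in>{1..T}. 0 < lam s"
    unfolding lam_def using marginal_pos_expectation[OF adm] T by auto
  have "(\<Sum>s\<in>{1..T}. lam s * exp_util M r u Y s) \<le> (\<Sum>s\<in>{1..T}. lam s * exp_util M r u X s)"
    if Y: "admissible M F T r W Y" for Y
  proof -
    have gain: "lam s * exp_util M r u Y s - lam s * exp_util M r u X s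
        \<le> (\<integral>x. marginal u r X T x * (disc r Y s x - disc r X s x) \<partial>M)" if s: "s \<in> {1..T}" for s
    proof -
      have "lam s * exp_util M r u Y s - lam s * exp_util M r u X s
          \<le> lam s * (\<integral>x. marginal u r X s x * (disc r Y s x - disc r X s x) \<partial>M)"
        using exp_util_below_linearisation[OF adm Y s] lam_pos s
        by (simp flip: right_diff_distrib add: mult_left_mono)
      also have "\<dots> = (\<integral>x. marginal u r X T x * (disc r Y s x - disc r X s x) \<partial>M)"
        unfolding lam_def using s
        by (intro pareto_marginal_proportional[OF po s, symmetric]
            Linfty_diff[OF disc_Linfty[OF Y s] disc_Linfty[OF adm s]])
      finally show ?thesis .
    qed
    have "(\<Sum>s\<in>{1..T}. lam s * exp_util M r u Y s) - (\<Sum>s\<in>{1..T}. lam s * exp_util M r u X s)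
        \<le> (\<Sum>s\<in>{1..T}. \<integral>x. marginal u r X T x * (disc r Y s x - disc r X s x) \<partial>M)"
      unfolding sum_subtractf[symmetric] by (intro sum_mono gain)
    also have "\<dots> = 0"
      using Linfty_F_M[OF _ marginal_Linfty[OF adm T]]
      by (intro admissible_deviation_orthogonal[OF adm Y]) auto
    finally show ?thesis by simp
  qed
  then show ?thesis using lam_pos adm unfolding solves_P_def by blast
qed

end

text \<open>A solution of P_lam with strictly positive weights is Pareto optimal: a Pareto
  improvement would strictly increase the weighted sum of expected utilities.\<close>
lemma solves_P_imp_pareto_optimal:
  assumes lam: "\<forall>t\<in>{1..T}. 0 < lam t" and sol: "solves_P M F T r u W lam X"
  shows "pareto_optimal M F T r u W X"
  unfolding pareto_optimal_def
proof (intro conjI notI)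
  show "admissible M F T r W X" using sol unfolding solves_P_def by blast
next
  assume "\<exists>Y. admissible M F T r W Y \<and>
           (\<forall>t\<in>{1..T}. exp_util M r u X t \<le> exp_util M r u Y t) \<and>
           (\<exists>t0\<in>{1..T}. exp_util M r u X t0 < exp_util M r u Y t0)"
  then obtain Y where Y: "admissible M F T r W Y"
    and le: "\<forall>t\<in>{1..T}. exp_util M r u X t \<le> exp_util M r u Y t"
    and less: "\<exists>t0\<in>{1..T}. exp_util M r u X t0 < exp_util M r u Y t0" by blast
  have "(\<Sum>t\<in>{1..T}. lam t * exp_util M r u X t) < (\<Sum>t\<in>{1..T}. lam t * exp_util M r u Y t)"
    using le less lam by (intro sum_strict_mono_ex1) (auto intro: mult_left_mono mult_strict_left_mono less_imp_le)
  moreover have "(\<Sum>t\<in>{1..T}. lam t * exp_util M r u Y t) \<le> (\<Sum>t\<in>{1..T}. lam t * exp_util M r u X t)"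
    using sol Y unfolding solves_P_def by blast
  ultimately show False by simp
qed

theorem theorem2p13:
  fixes M :: "'a measure" and F :: "nat \<Rightarrow> 'a measure" and T :: nat
    and r :: "nat \<Rightarrow> 'a \<Rightarrow> real" and u :: "nat \<Rightarrow> real \<Rightarrow> real"
    and W :: "'a \<Rightarrow> real" and X :: "nat \<Rightarrow> 'a \<Rightarrow> real"
  assumes "prob_space M"
    and "1 \<le> T"
    and "finite_filtration M F T"
    and "rate_process M F T r"
    and "\<forall>t\<in>{1..T}. utility (u t)"
    and "Linfty M (F T) W"
    and "admissible M F T r W X"
  shows "pareto_optimal M F T r u W X \<longleftrightarrow>
         (\<exists>lam :: nat \<Rightarrow> real. (\<forall>t\<in>{1..T}. 0 < lam t) \<and> solves_P M F T r u W lam X)"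
proof -
  interpret economy M F T r u
    using assms(1-5) by (simp add: economy_def economy_axioms_def market_def market_axioms_def)
  show ?thesis using pareto_imp_solves_P solves_P_imp_pareto_optimal by blast
qed

end
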